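(* Let $f:\mathbb{R}\to\mathbb{R}\cup\{\pm\infty\}$ be a proper concave function such that $f(\delta)\le0$ and $\partial f(\delta)\cap\mathbb{R}_{<0}\ne\emptyset$ for some $\delta\in\operatorname{dom}(f)$, and such that $f$ has a root or attains its maximum; let $\delta^*:=\max(\{\delta:f(\delta)=0\}\cup\operatorname{argmax}f)$. Run the (standard) Newton–Dinkelbach method described in the context. Then for every iteration $i\ge2$, $D_f(\delta^*,\delta^{(i)})\le D_f(\delta^*,\delta^{(i-1)})$, and equality holds if and only if $g^{(i-1)}=\inf_{g\in\partial f(\delta^{(i-1)})}g$ and $f(\delta^{(i)})=0$.
   Context: $\operatorname{dom}(f):=\{x:-\infty<f(x)<\infty\}$; $\partial f(x_0):=\{g: f(x)\le f(x_0)+g(x-x_0)\ \forall x\in\mathbb{R}\}$. Bregman divergence: $D_f(\delta',\delta):=f(\delta)+\sup_{g\in\partial f(\delta)}g(\delta'-\delta)-f(\delta')$ if $\delta\ne\delta'$, and $0$ if $\delta=\delta'$ (for $\delta,\delta'\in\operatorname{dom}(f)$, $\partial f(\delta)\ne\emptyset$). Newton–Dinkelbach method: input $\delta^{(1)}\in\operatorname{dom}(f)$, $g^{(1)}\in\partial f(\delta^{(1)})$ with $f(\delta^{(1)})\le0$, $g^{(1)}<0$. At iteration $i$: if $f(\delta^{(i)})=0$ return $\delta^{(i)}$; otherwise $\delta:=\delta^{(i)}-f(\delta^{(i)})/g^{(i)}$ and some $g\in\partial f(\delta)$ from an oracle; if $f(\delta)=-\infty$, or $f(\delta)<0$ and $g\ge0$,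 report no root; otherwise $\delta^{(i+1)}:=\delta$, $g^{(i+1)}:=g$. *)

theory Defs
  imports "HOL-Analysis.Analysis" "HOL-Library.Extended_Real"
begin

definition edom :: "(real \<Rightarrow> ereal) \<Rightarrow> real set" where
  "edom f = {x. -\<infinity> < f x \<and> f x < \<infinity>}"

definition proper_concave :: "(real \<Rightarrow> ereal) \<Rightarrow> bool" where
  "proper_concave f \<longleftrightarrow>
     (\<forall>x. f x \<noteq> \<infinity>) \<and> (\<exists>x. f x \<noteq> -\<infinity>) \<and>
     (\<forall>x y t. 0 < t \<and> t < 1 \<longrightarrow>
        ereal t * f x + ereal (1 - t) * f y \<le> f (t * x + (1 - t) * y))"

definition supdiff :: "(real \<Rightarrow> ereal) \<Rightarrow> real \<Rightarrow> real set" where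
  "supdiff f x0 = {g. \<forall>x. f x \<le> f x0 + ereal (g * (x - x0))}"

definition bregman :: "(real \<Rightarrow> ereal) \<Rightarrow> real \<Rightarrow> real \<Rightarrow> ereal" where
  "bregman f d' d =
     (if d = d' then 0
      else f d + (SUP g\<in>supdiff f d. ereal (g * (d' - d))) - f d')"

definition delta_star :: "(real \<Rightarrow> ereal) \<Rightarrow> real" where
  "delta_star f = (GREATEST x. f x = 0 \<or> (\<forall>y. f y \<le> f x))"

end

theory Submission
  imports Defs
begin

text \<open>Let \<open>a\<close>, \<open>b\<close> be the last two iterates and \<open>g\<^sub>a < 0\<close> the supergradient used at \<open>a\<close>.
  The tangent line at \<open>a\<close> vanishes at \<open>b\<close>, so right of \<open>b\<close> the function \<open>f\<close> is negative and
  below \<open>f b\<close> (by the supergradient at \<open>b\<close> when \<open>f b < 0\<close>). Hence all roots and maximisers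
  lie left of \<open>b\<close>; as \<open>f\<close> is finite at \<open>a > b\<close>, concavity makes both sets contain their
  suprema, so \<open>\<delta>\<^sup>*\<close> exists and \<open>\<delta>\<^sup>* \<le> b\<close>.

  If \<open>\<delta>\<^sup>* < b\<close>, then \<open>f b < 0\<close> and every supergradient at \<open>b\<close> is at least \<open>g\<^sub>a\<close>, so
  \<open>D(\<delta>\<^sup>*, b) \<le> f b + g\<^sub>a (\<delta>\<^sup>* - b) - f \<delta>\<^sup>* < f a + g\<^sub>a (\<delta>\<^sup>* - a) - f \<delta>\<^sup>* \<le> D(\<delta>\<^sup>*, a)\<close>.
  If \<open>\<delta>\<^sup>* = b\<close>, then \<open>D(\<delta>\<^sup>*, b) = 0\<close> while \<open>D(\<delta>\<^sup>*, a)\<close> is the sum of the nonnegative terms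
  \<open>sup\<^sub>h h (\<delta>\<^sup>* - a) - g\<^sub>a (\<delta>\<^sup>* - a)\<close> and \<open>- f b\<close>, which both vanish exactly when \<open>g\<^sub>a\<close> is
  the least supergradient at \<open>a\<close> and \<open>f b = 0\<close>.\<close>

lemma proper_concaveD:
  "proper_concave f \<Longrightarrow> 0 < t \<Longrightarrow> t < 1 \<Longrightarrow>
    ereal t * f x + ereal (1 - t) * f y \<le> f (t * x + (1 - t) * y)"
  unfolding proper_concave_def by blast

lemma proper_concave_not_PInf: "proper_concave f \<Longrightarrow> f x \<noteq> \<infinity>"
  unfolding proper_concave_def by blast

lemma proper_concave_between:
  assumes "proper_concave f" "x < y" "y < z"
  shows "ereal ((z - y) / (z - x)) * f x + ereal ((y - x) / (z - x)) * f z \<le> f y"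
proof -
  define t where "t = (z - y) / (z - x)"
  have "0 < t" "t < 1" using assms(2,3) by (auto simp: t_def field_simps)
  moreover have "1 - t = (y - x) / (z - x)" using assms(2,3) by (simp add: t_def field_simps)
  moreover have "t * x + (1 - t) * z = y"
  proof -
    have "t * x + (1 - t) * z = z - t * (z - x)" by (simp add: algebra_simps)
    also have "t * (z - x) = z - y" using assms(2,3) by (simp add: t_def)
    finally show ?thesis by simp
  qed
  ultimately show ?thesis using proper_concaveD[OF assms(1)] t_def by metis
qed

lemma proper_concave_ge_between:
  assumes "proper_concave f" "x \<le> y" "y \<le> z" "ereal c \<le> f x" "ereal c \<le> f z"
  shows "ereal c \<le> f y"
proof (cases "x < y \<and> y < z")
  case True
  define t where "t = (z - y) / (z - x)"
  have t: "0 \<le> t" "0 \<le> 1 - t" "1 - t = (y - x) / (z - x)"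
    using True by (auto simp: t_def field_simps)
  have "ereal c = ereal (t * c + (1 - t) * c)" by (simp add: algebra_simps)
  also have "\<dots> = ereal t * ereal c + ereal (1 - t) * ereal c" by simp
  also have "\<dots> \<le> ereal t * f x + ereal (1 - t) * f z"
    using assms(4,5) t by (intro add_mono ereal_mult_left_mono) auto
  also have "\<dots> \<le> f y"
    using proper_concave_between[OF assms(1)] True t(3) t_def by metis
  finally show ?thesis .
qed (use assms in \<open>auto simp: le_less\<close>)

lemma proper_concave_pos_between:
  assumes "proper_concave f" "x < y" "y < z" "f x = 0" "0 < f z"
  shows "0 < f y"
proof -
  have "0 < ereal ((y - x) / (z - x)) * f z"
    using assms(2,3,5) by (simp add: ereal_zero_less_0_iff)
  also have "\<dots> = ereal ((z - y) / (z - x)) * f x + ereal ((y - x) / (z - x)) * f z"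
    using assms(4) by simp
  also have "\<dots> \<le> f y" by (rule proper_concave_between[OF assms(1-3)])
  finally show ?thesis .
qed

lemma proper_concave_ge_from_left:
  assumes conc: "proper_concave f" and "y < t" "t < a" "f a \<noteq> -\<infinity>"
    and left: "\<forall>x\<in>{y<..<t}. ereal c \<le> f x"
  shows "ereal c \<le> f t"
proof -
  obtain fa where fa: "f a = ereal fa"
    using assms(4) proper_concave_not_PInf[OF conc] by (cases "f a") auto
  \<comment> \<open>\<open>t\<close> is the convex combination of \<open>x\<close> and \<open>a\<close> with weight \<open>l x\<close>, and \<open>l x \<rightarrow> 1\<close> as \<open>x \<rightarrow> t\<close>\<close>
  define l where "l x = (a - t) / (a - x)" for x
  have "((\<lambda>x. l x * c + (1 - l x) * fa) \<longlongrightarrow> l t * c + (1 - l t) * fa) (at_left t)"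
    unfolding l_def using \<open>t < a\<close> by (intro tendsto_intros) auto
  then have lim: "((\<lambda>x. ereal (l x * c + (1 - l x) * fa)) \<longlongrightarrow> ereal c) (at_left t)"
    using \<open>t < a\<close> by (simp add: l_def)
  have "ereal (l x * c + (1 - l x) * fa) \<le> f t" if x: "x \<in> {y<..<t}" for x
  proof -
    have l: "0 \<le> l x" "1 - l x = (t - x) / (a - x)"
      using x \<open>t < a\<close> by (auto simp: l_def field_simps)
    have "ereal (l x * c + (1 - l x) * fa) = ereal (l x) * ereal c + ereal (1 - l x) * f a"
      by (simp add: fa)
    also have "\<dots> \<le> ereal (l x) * f x + ereal (1 - l x) * f a"
      using left x l \<open>t < a\<close> by (intro add_mono ereal_mult_left_mono) auto
    also have "\<dots> \<le> f t"
      using proper_concave_between[OF conc _ \<open>t < a\<close>, of x] x l by (simp add: l_def)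
    finally show ?thesis .
  qed
  then have "eventually (\<lambda>x. ereal (l x * c + (1 - l x) * fa) \<le> f t) (at_left t)"
    using eventually_at_left_real[OF \<open>y < t\<close>] by (auto elim: eventually_mono)
  then show ?thesis by (rule tendsto_upperbound[OF lim]) simp
qed

lemma proper_concave_ge_Sup:
  assumes conc: "proper_concave f" and P: "P \<noteq> {}" "bdd_above P"
    and "Sup P < a" "f a \<noteq> -\<infinity>" and ge: "\<forall>x\<in>P. ereal c \<le> f x"
  shows "ereal c \<le> f (Sup P)"
proof -
  obtain y where y: "y \<in> P" using P(1) by blast
  have "y \<le> Sup P" using y P(2) by (rule cSup_upper)
  show ?thesis
  proof (cases "y = Sup P")
    case True
    then show ?thesis using ge y by auto
  next
    case False
    have "ereal c \<le> f x" if x: "x \<in> {y<..<Sup P}" for x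
    proof -
      obtain z where "z \<in> P" "x < z" using x less_cSup_iff[OF P] by auto
      then show ?thesis using ge y x by (intro proper_concave_ge_between[OF conc, of y x z]) auto
    qed
    with False \<open>y \<le> Sup P\<close> assms(4,5) show ?thesis
      by (intro proper_concave_ge_from_left[OF conc, of y _ a]) auto
  qed
qed

lemma proper_concave_Sup_roots:
  assumes conc: "proper_concave f" and R: "{x. f x = 0} \<noteq> {}" "bdd_above {x. f x = 0}"
    and "Sup {x. f x = 0} < a" "f a \<noteq> -\<infinity>"
  shows "f (Sup {x. f x = 0}) = 0"
proof (rule ccontr)
  define t where "t = Sup {x. f x = 0}"
  assume "f (Sup {x. f x = 0}) \<noteq> 0"
  moreover have "0 \<le> f t"
    using proper_concave_ge_Sup[OF conc R assms(4,5), of 0] by (simp add: t_def zero_ereal_def)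
  ultimately have pos: "0 < f t" by (simp add: t_def)
  have below: "x < t" if "f x = 0" for x
    using cSup_upper[OF _ R(2), of x] that pos by (force simp: t_def le_less)
  obtain y where y: "f y = 0" using R(1) by blast
  obtain z where z: "f z = 0" "y < z"
    using less_cSup_iff[OF R] below[OF y] by (auto simp: t_def)
  have "0 < f z" using proper_concave_pos_between[OF conc z(2) below[OF z(1)] y pos] .
  with z(1) show False by simp
qed

lemma proper_concave_Sup_argmax:
  assumes conc: "proper_concave f"
    and A: "{x. \<forall>y. f y \<le> f x} \<noteq> {}" "bdd_above {x. \<forall>y. f y \<le> f x}"
    and "Sup {x. \<forall>y. f y \<le> f x} < a" "f a \<noteq> -\<infinity>"
  shows "\<forall>y. f y \<le> f (Sup {x. \<forall>y. f y \<le> f x})"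
proof -
  obtain m where m: "\<forall>y. f y \<le> f m" using A(1) by blast
  obtain M where M: "f m = ereal M"
    using m assms(5) proper_concave_not_PInf[OF conc, of m] by (cases "f m") force+
  have "ereal M \<le> f (Sup {x. \<forall>y. f y \<le> f x})"
    using m by (intro proper_concave_ge_Sup[OF conc A assms(4,5)]) (metis M mem_Collect_eq)
  with m M show ?thesis by (metis order_trans)
qed

lemma delta_star_greatest:
  assumes conc: "proper_concave f"
    and root_or_max: "(\<exists>x. f x = 0) \<or> (\<exists>x. \<forall>y. f y \<le> f x)"
    and bound: "\<And>x. f x = 0 \<or> (\<forall>y. f y \<le> f x) \<Longrightarrow> x \<le> b"
    and "b < a" "f a \<noteq> -\<infinity>"
  shows "f (delta_star f) = 0 \<or> (\<forall>y. f y \<le> f (delta_star f))"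
    and "\<And>x. f x = 0 \<or> (\<forall>y. f y \<le> f x) \<Longrightarrow> x \<le> delta_star f"
proof -
  define R where "R = {x. f x = 0}"
  define A where "A = {x. \<forall>y. f y \<le> f x}"
  have cand: "{x. f x = 0 \<or> (\<forall>y. f y \<le> f x)} = R \<union> A" by (auto simp: R_def A_def)
  have bdd: "bdd_above R" "bdd_above A"
    using bound by (auto simp: R_def A_def bdd_above_def)
  have "Sup R \<le> b" if "R \<noteq> {}" using that bound by (intro cSup_least) (auto simp: R_def)
  then have R: "Sup R \<in> R" if "R \<noteq> {}"
    using proper_concave_Sup_roots[OF conc, of a] that bdd(1) \<open>b < a\<close> assms(5)
    by (fastforce simp: R_def)
  have "Sup A \<le> b" if "A \<noteq> {}" using that bound by (intro cSup_least) (auto simp: A_def)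
  then have A: "Sup A \<in> A" if "A \<noteq> {}"
    using proper_concave_Sup_argmax[OF conc, of a] that bdd(2) \<open>b < a\<close> assms(5)
    by (fastforce simp: A_def)
  have "R \<union> A \<noteq> {}" using root_or_max by (auto simp: R_def A_def)
  consider "R = {}" | "A = {}" | "R \<noteq> {}" "A \<noteq> {}" by blast
  then have Sup_mem: "Sup (R \<union> A) \<in> R \<union> A"
  proof cases
    case 1
    with \<open>R \<union> A \<noteq> {}\<close> A show ?thesis by simp
  next
    case 2
    with \<open>R \<union> A \<noteq> {}\<close> R show ?thesis by simp
  next
    case 3
    with R A bdd show ?thesis by (simp add: cSup_union_distrib sup_max max_def)
  qed
  have "delta_star f = Sup (R \<union> A)"
    unfolding delta_star_def
  proof (rule Greatest_equality)
    show "f (Sup (R \<union> A)) = 0 \<or> (\<forall>y. f y \<le> f (Sup (R \<union> A)))"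
      using Sup_mem cand by blast
    show "y \<le> Sup (R \<union> A)" if "f y = 0 \<or> (\<forall>z. f z \<le> f y)" for y
      using that cand bdd by (intro cSup_upper) auto
  qed
  with Sup_mem cand bdd show "f (delta_star f) = 0 \<or> (\<forall>y. f y \<le> f (delta_star f))"
    and "\<And>x. f x = 0 \<or> (\<forall>y. f y \<le> f x) \<Longrightarrow> x \<le> delta_star f"
    by (auto intro: cSup_upper)
qed

lemma supdiff_le_tangent:
  assumes "g \<in> supdiff f x0" "f x0 = ereal y0"
  shows "f x \<le> ereal (y0 + g * (x - x0))"
proof -
  have "f x \<le> f x0 + ereal (g * (x - x0))" using assms(1) unfolding supdiff_def by blast
  with assms(2) show ?thesis by simp
qed

lemma supdiff_antimono:
  assumes "x < y" "gx \<in> supdiff f x" "gy \<in> supdiff f y" "f x = ereal fx" "f y = ereal fy"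
  shows "gy \<le> gx"
proof -
  have "fx \<le> fy + gy * (x - y)" "fy \<le> fx + gx * (y - x)"
    using supdiff_le_tangent[OF assms(3,5), of x] supdiff_le_tangent[OF assms(2,4), of y]
      assms(4,5) by simp_all
  then have "0 \<le> (gx - gy) * (y - x)" by (simp add: algebra_simps)
  with \<open>x < y\<close> show ?thesis by (simp add: zero_le_mult_iff)
qed

lemma supdiff_newton_step_nonpos:
  assumes "g \<in> supdiff f x" "f x = ereal fx" "g \<noteq> 0"
  shows "f (x - fx / g) \<le> 0"
  using supdiff_le_tangent[OF assms(1,2), of "x - fx / g"] assms(3) by (simp add: zero_ereal_def)

lemma newton_dinkelbach_iterates:
  assumes init: "f (d 1) \<noteq> -\<infinity>" "g 1 \<in> supdiff f (d 1)" "f (d 1) \<le> 0" "g 1 < 0"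
    and run: "\<forall>j. 1 \<le> j \<and> j < i \<longrightarrow>
                 f (d j) \<noteq> 0 \<and>
                 d (Suc j) = d j - real_of_ereal (f (d j)) / g j \<and>
                 g (Suc j) \<in> supdiff f (d (Suc j)) \<and>
                 f (d (Suc j)) \<noteq> -\<infinity> \<and>
                 \<not> (f (d (Suc j)) < 0 \<and> g (Suc j) \<ge> 0)"
    and "1 \<le> j" "j \<le> i"
  shows "f (d j) \<noteq> -\<infinity> \<and> f (d j) \<le> 0 \<and> g j \<in> supdiff f (d j) \<and> (f (d j) < 0 \<longrightarrow> g j < 0)"
  using \<open>1 \<le> j\<close> \<open>j \<le> i\<close>
proof (induction j rule: nat_induct_at_least)
  case base
  then show ?case using init by simp
next
  case (Suc j)
  then have IH: "f (d j) \<noteq> -\<infinity>" "f (d j) \<le> 0" "g j \<in> supdiff f (d j)" "f (d j) < 0 \<longrightarrow> g j < 0"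
    and step: "f (d j) \<noteq> 0" "d (Suc j) = d j - real_of_ereal (f (d j)) / g j"
      "g (Suc j) \<in> supdiff f (d (Suc j))" "f (d (Suc j)) \<noteq> -\<infinity>"
      "\<not> (f (d (Suc j)) < 0 \<and> g (Suc j) \<ge> 0)"
    using run by auto
  obtain fj where fj: "f (d j) = ereal fj" using IH(1,2) by (cases "f (d j)") auto
  have "g j < 0" using IH(2,4) step(1) by simp
  then have "f (d (Suc j)) \<le> 0"
    using supdiff_newton_step_nonpos[OF IH(3) fj] step(2) fj by simp
  with step(3-5) show ?case by auto
qed

lemma roots_and_maximisers_le_newton_step:
  assumes ga: "ga \<in> supdiff f a" "ga < 0" and fa: "f a = ereal fa"
    and b: "b = a - fa / ga" and gb: "gb \<in> supdiff f b" and fb: "f b = ereal fb" "fb \<le> 0"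
    and gb_neg: "fb < 0 \<Longrightarrow> gb < 0"
    and x: "f x = 0 \<or> (\<forall>y. f y \<le> f x)"
  shows "x \<le> b"
proof (rule ccontr)
  assume "\<not> x \<le> b"
  then have "b < x" by simp
  have "f x < 0 \<and> f x < f b"
  proof (cases "fb = 0")
    case True
    have "f x \<le> ereal (fa + ga * (x - a))" by (rule supdiff_le_tangent[OF ga(1) fa])
    also have "fa + ga * (x - a) = ga * (x - b)" using b ga(2) by (simp add: field_simps)
    also have "ereal (ga * (x - b)) < 0" using ga(2) \<open>b < x\<close> by (simp add: mult_neg_pos)
    finally show ?thesis using True fb(1) by (simp add: zero_ereal_def)
  next
    case False
    with fb(2) gb_neg have "gb < 0" by simp
    have "f x \<le> ereal (fb + gb * (x - b))" by (rule supdiff_le_tangent[OF gb fb(1)])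
    also have "\<dots> < ereal fb" using \<open>gb < 0\<close> \<open>b < x\<close> by (simp add: mult_neg_pos)
    finally have "f x < ereal fb" .
    moreover from fb(2) have "ereal fb \<le> 0" by simp
    ultimately show ?thesis using fb(1) by (simp add: less_le_trans)
  qed
  with x show False by (metis leD less_irrefl)
qed

lemma SUP_mult_neg_eq_iff_INF_eq:
  fixes S :: "real set"
  assumes "x \<in> S" "u < 0"
  shows "(SUP h\<in>S. ereal (h * u)) = ereal (x * u) \<longleftrightarrow> ereal x = (INF h\<in>S. ereal h)"
proof -
  have "(SUP h\<in>S. ereal (h * u)) = ereal (x * u) \<longleftrightarrow> (\<forall>h\<in>S. x \<le> h)"
  proof
    assume eq: "(SUP h\<in>S. ereal (h * u)) = ereal (x * u)"
    show "\<forall>h\<in>S. x \<le> h"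
    proof
      fix h assume "h \<in> S"
      then have "ereal (h * u) \<le> ereal (x * u)" by (metis eq SUP_upper)
      with \<open>u < 0\<close> show "x \<le> h" by simp
    qed
  next
    assume "\<forall>h\<in>S. x \<le> h"
    with assms show "(SUP h\<in>S. ereal (h * u)) = ereal (x * u)"
      by (intro antisym SUP_least SUP_upper2[of x]) (auto simp: mult_right_mono_neg)
  qed
  also have "\<dots> \<longleftrightarrow> ereal x = (INF h\<in>S. ereal h)"
  proof
    assume "\<forall>h\<in>S. x \<le> h"
    with assms(1) show "ereal x = (INF h\<in>S. ereal h)"
      by (intro antisym INF_greatest INF_lower) auto
  next
    assume "ereal x = (INF h\<in>S. ereal h)"
    then show "\<forall>h\<in>S. x \<le> h" by (metis INF_lower ereal_less_eq(3))
  qed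
  finally show ?thesis .
qed

lemma bregman_newton_step:
  fixes f :: "real \<Rightarrow> ereal"
  assumes ga: "ga \<in> supdiff f a" "ga < 0" and fa: "f a = ereal fa" "fa < 0"
    and b: "b = a - fa / ga" and fb: "f b = ereal fb" "fb \<le> 0"
    and fs: "f s = ereal fs" and "s \<le> b" and root: "fb = 0 \<Longrightarrow> b \<le> s"
  shows "bregman f s b \<le> bregman f s a \<and>
    (bregman f s b = bregman f s a \<longleftrightarrow> ereal ga = (INF h\<in>supdiff f a. ereal h) \<and> fb = 0)"
proof -
  have "b < a" using b fa(2) ga(2) by (simp add: divide_neg_neg)
  have tangent: "fa + ga * (s - a) = ga * (s - b)" using b ga(2) by (simp add: field_simps)
  define U where "U = (SUP h\<in>supdiff f a. ereal (h * (s - a)))"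
  have Da: "bregman f s a = ereal fa + U - ereal fs"
    using \<open>s \<le> b\<close> \<open>b < a\<close> fa fs by (simp add: bregman_def U_def)
  have U_ge: "ereal (ga * (s - a)) \<le> U" unfolding U_def using ga(1) by (rule SUP_upper)
  have lower: "ereal (ga * (s - b) - fs) \<le> bregman f s a"
    using U_ge tangent unfolding Da by (cases U) auto
  show ?thesis
  proof (cases "s = b")
    case False
    with \<open>s \<le> b\<close> root fb(2) have "s < b" "fb < 0" by force+
    define V where "V = (SUP h\<in>supdiff f b. ereal (h * (s - b)))"
    have "V \<le> ereal (ga * (s - b))"
      unfolding V_def
    proof (rule SUP_least)
      fix h assume "h \<in> supdiff f b"
      then have "ga \<le> h" using supdiff_antimono[OF \<open>b < a\<close> _ ga(1) fb(1) fa(1)] by blast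
      with \<open>s < b\<close> show "ereal (h * (s - b)) \<le> ereal (ga * (s - b))"
        by (simp add: mult_right_mono_neg)
    qed
    then have "bregman f s b \<le> ereal (fb + ga * (s - b) - fs)"
      using False fb(1) fs by (cases V) (auto simp: bregman_def V_def)
    also have "\<dots> < ereal (ga * (s - b) - fs)" using \<open>fb < 0\<close> by simp
    also have "\<dots> \<le> bregman f s a" by (rule lower)
    finally show ?thesis using \<open>fb < 0\<close> by (simp add: less_imp_le less_imp_neq)
  next
    case True
    then have Db: "bregman f s b = 0" by (simp add: bregman_def)
    have "0 \<le> ereal (ga * (s - b) - fs)" using True fb fs by simp
    then have le: "bregman f s b \<le> bregman f s a" unfolding Db using lower by (rule order_trans)
    have "bregman f s b = bregman f s a \<longleftrightarrow> U = ereal (ga * (s - a)) \<and> fb = 0"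
      using U_ge tangent True fb fs unfolding Da Db by (cases U) auto
    also have "U = ereal (ga * (s - a)) \<longleftrightarrow> ereal ga = (INF h\<in>supdiff f a. ereal h)"
      unfolding U_def using ga(1) \<open>b < a\<close> True by (intro SUP_mult_neg_eq_iff_INF_eq) auto
    finally have "bregman f s b = bregman f s a \<longleftrightarrow>
        ereal ga = (INF h\<in>supdiff f a. ereal h) \<and> fb = 0" .
    with le show ?thesis by (rule conjI)
  qed
qed

theorem lemma3p3:
  fixes f :: "real \<Rightarrow> ereal" and d g :: "nat \<Rightarrow> real" and i :: nat
  assumes conc: "proper_concave f"
    and ex_start: "\<exists>x\<in>edom f. f x \<le> 0 \<and> supdiff f x \<inter> {..<0} \<noteq> {}"
    and root_or_max: "(\<exists>x. f x = 0) \<or> (\<exists>x. \<forall>y. f y \<le> f x)"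
    and init: "d 1 \<in> edom f" "g 1 \<in> supdiff f (d 1)" "f (d 1) \<le> 0" "g 1 < 0"
    and run: "\<forall>j. 1 \<le> j \<and> j < i \<longrightarrow>
                 f (d j) \<noteq> 0 \<and>
                 d (Suc j) = d j - real_of_ereal (f (d j)) / g j \<and>
                 g (Suc j) \<in> supdiff f (d (Suc j)) \<and>
                 f (d (Suc j)) \<noteq> -\<infinity> \<and>
                 \<not> (f (d (Suc j)) < 0 \<and> g (Suc j) \<ge> 0)"
    and i2: "2 \<le> i"
  shows "bregman f (delta_star f) (d i) \<le> bregman f (delta_star f) (d (i - 1)) \<and>
         (bregman f (delta_star f) (d i) = bregman f (delta_star f) (d (i - 1)) \<longleftrightarrow>
            ereal (g (i - 1)) = (INF h\<in>supdiff f (d (i - 1)). ereal h) \<and> f (d i) = 0)"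
proof -
  define k where "k = i - 1"
  have i: "i = Suc k" "1 \<le> k" using i2 by (auto simp: k_def)
  have iterate: "f (d j) \<noteq> -\<infinity> \<and> f (d j) \<le> 0 \<and> g j \<in> supdiff f (d j) \<and> (f (d j) < 0 \<longrightarrow> g j < 0)"
    if "j \<in> {k, i}" for j
    using newton_dinkelbach_iterates[OF _ init(2-4) run, of j] init(1) that i
    by (auto simp: edom_def)
  have step: "f (d k) \<noteq> 0" "d i = d k - real_of_ereal (f (d k)) / g k" using run i by auto
  obtain fa fb where fa: "f (d k) = ereal fa" and fb: "f (d i) = ereal fb"
    using iterate[of k] iterate[of i] by (cases "f (d k)"; cases "f (d i)") auto
  have "fa < 0" "g k < 0" "fb \<le> 0" using iterate[of k] iterate[of i] step(1) fa fb by auto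
  have di: "d i = d k - fa / g k" using step(2) fa by simp
  have "d i < d k" using di \<open>fa < 0\<close> \<open>g k < 0\<close> by (simp add: divide_neg_neg)
  have bound: "x \<le> d i" if "f x = 0 \<or> (\<forall>y. f y \<le> f x)" for x
    using roots_and_maximisers_le_newton_step[OF _ \<open>g k < 0\<close> fa di _ fb \<open>fb \<le> 0\<close> _ that]
      iterate[of k] iterate[of i] fb by auto
  have "f (d k) \<noteq> -\<infinity>" using fa by simp
  note ds = delta_star_greatest[OF conc root_or_max bound \<open>d i < d k\<close> this]
  obtain fs where fs: "f (delta_star f) = ereal fs"
    using ds(1) fa fb proper_concave_not_PInf[OF conc, of "delta_star f"]
    by (cases "f (delta_star f)") force+
  have gk: "g k \<in> supdiff f (d k)" using iterate[of k] by simp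
  have s_le: "delta_star f \<le> d i" using bound ds(1) .
  have root: "d i \<le> delta_star f" if "fb = 0" using ds(2)[of "d i"] fb that by simp
  note bregman_newton_step[OF gk \<open>g k < 0\<close> fa \<open>fa < 0\<close> di fb \<open>fb \<le> 0\<close> fs s_le root]
  then show ?thesis using fb by (simp add: k_def)
qed

end
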